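(* Let $H\subseteq\ell^2$ be the Hilbert cube of real sequences $x$ with $x_k\in[0,\tfrac1k]$ for all $k\in\mathbb{N}$, with the $\ell^2$ metric. Define $x=0$, $y=\tfrac12e_1+\sum_{k=2}^\infty\tfrac1k e_k$, and $z=e_1$. Then $\{x,y,z\}$ is an optimal code of size $3$ in $H$ and is unique up to isometry.
   Context: An optimal code of size $n$ is an $n$-element subset of $H$ maximizing the minimum distance between distinct points; unique up to isometry means every optimal code of size $3$ is the image of $\{x,y,z\}$ under an isometry of $H$ onto itself. $e_k$ is the $k$th standard basis vector. *)

theory Defs
  imports "HOL-Analysis.Analysis"
begin

text \<open>Real sequences are modelled as functions nat => real; coordinates are indexed
  by k >= 1 and coordinate 0 is forced to be 0 (since 1 / real 0 = 0 in Isabelle).\<close>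

definition hilbert_cube :: "(nat \<Rightarrow> real) set" where
  "hilbert_cube = {x. x 0 = 0 \<and> (\<forall>k\<ge>1. 0 \<le> x k \<and> x k \<le> 1 / real k)}"

definition l2dist :: "(nat \<Rightarrow> real) \<Rightarrow> (nat \<Rightarrow> real) \<Rightarrow> real" where
  "l2dist a b = sqrt (\<Sum>k. (a k - b k)^2)"

definition min_dist :: "(nat \<Rightarrow> real) set \<Rightarrow> real" where
  "min_dist C = Inf {l2dist a b | a b. a \<in> C \<and> b \<in> C \<and> a \<noteq> b}"

definition optimal_code :: "nat \<Rightarrow> (nat \<Rightarrow> real) set \<Rightarrow> bool" where
  "optimal_code n C \<longleftrightarrow> C \<subseteq> hilbert_cube \<and> finite C \<and> card C = n \<and>
     (\<forall>D. D \<subseteq> hilbert_cube \<and> finite D \<and> card D = n \<longrightarrow> min_dist D \<le> min_dist C)"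

definition cube_isometry :: "((nat \<Rightarrow> real) \<Rightarrow> (nat \<Rightarrow> real)) \<Rightarrow> bool" where
  "cube_isometry f \<longleftrightarrow> bij_betw f hilbert_cube hilbert_cube \<and>
     (\<forall>a\<in>hilbert_cube. \<forall>b\<in>hilbert_cube. l2dist (f a) (f b) = l2dist a b)"

definition e :: "nat \<Rightarrow> nat \<Rightarrow> real" where
  "e j = (\<lambda>k. if k = j then 1 else 0)"

definition pt_x :: "nat \<Rightarrow> real" where "pt_x = (\<lambda>k. 0)"
definition pt_y :: "nat \<Rightarrow> real" where
  "pt_y = (\<lambda>k. if k = 0 then 0 else if k = 1 then 1/2 else 1 / real k)"
definition pt_z :: "nat \<Rightarrow> real" where "pt_z = e 1"

end

theory Submission
  imports Defs
begin

text \<open>Write \<open>W = \<Sum>k\<ge>1. 1/k\<^sup>2\<close>. For two points \<open>a, b\<close> of the cube every coordinate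
  difference is at most \<open>1/k\<close>, so \<open>\<parallel>a - b\<parallel>\<^sup>2 \<le> W - 1 + (a\<^sub>1 - b\<^sub>1)\<^sup>2\<close>, with equality iff
  all coordinates other than the first differ by the full \<open>1/k\<close>. Among three points two
  have first coordinates at most \<open>1/2\<close> apart, so the minimum distance of a 3-code is
  at most \<open>\<surd>(W - 3/4)\<close>; this is attained by \<open>{x, y, z}\<close> because \<open>W \<le> 7/4\<close>.
  In an optimal code the first coordinates must then be \<open>0, 1/2, 1\<close>, and the two pairs
  at first-coordinate distance \<open>1/2\<close> are extremal in every other coordinate. Such a
  triple is the image of \<open>{x, y, z}\<close> under the isometry \<open>u\<^sub>k \<mapsto> 1/k - u\<^sub>k\<close> applied to
  the coordinates where the point with first coordinate \<open>0\<close> is nonzero.\<close>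

definition side_sq :: "nat \<Rightarrow> real" where
  "side_sq k = (1 / real k)^2"

definition cube_diam_sq :: real where
  "cube_diam_sq = suminf side_sq"

definition sqdist :: "(nat \<Rightarrow> real) \<Rightarrow> (nat \<Rightarrow> real) \<Rightarrow> real" where
  "sqdist a b = (\<Sum>k. (a k - b k)^2)"

definition cube_reflect :: "nat set \<Rightarrow> (nat \<Rightarrow> real) \<Rightarrow> nat \<Rightarrow> real" where
  "cube_reflect S u = (\<lambda>k. if k \<in> S then 1 / real k - u k else u k)"

lemma l2dist_sqdist: "l2dist a b = sqrt (sqdist a b)"
  by (simp add: l2dist_def sqdist_def)

lemma sqdist_commute: "sqdist a b = sqdist b a"
  by (simp add: sqdist_def power2_commute)

lemma summable_side_sq: "summable side_sq"
proof -
  have "summable (\<lambda>n. inverse (real n ^ 2))" by (rule inverse_power_summable) simp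
  then show ?thesis unfolding side_sq_def by (simp add: power_divide inverse_eq_divide)
qed

lemma sum_side_sq_le: "sum side_sq {..<n + 3} \<le> 7/4 - 1 / (real n + 2)"
proof (induction n)
  case 0
  show ?case by (simp add: eval_nat_numeral side_sq_def power2_eq_square)
next
  case (Suc n)
  have "side_sq (n + 3) = 1 / ((real n + 3) * (real n + 3))"
    by (simp add: side_sq_def power2_eq_square add_ac)
  also have "\<dots> \<le> 1 / ((real n + 2) * (real n + 3))"
    by (intro divide_left_mono mult_right_mono) auto
  also have "\<dots> = 1 / (real n + 2) - 1 / (real n + 3)"
    by (simp add: field_simps)
  finally have step: "side_sq (n + 3) \<le> 1 / (real n + 2) - 1 / (real n + 3)" .
  have "sum side_sq {..<Suc n + 3} = sum side_sq {..<n + 3} + side_sq (n + 3)"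
    by (metis add_Suc sum.lessThan_Suc)
  also have "\<dots> \<le> (7/4 - 1 / (real n + 2)) + (1 / (real n + 2) - 1 / (real n + 3))"
    using Suc.IH step by (rule add_mono)
  also have "\<dots> = 7/4 - 1 / (real (Suc n) + 2)"
    by (simp add: add.commute)
  finally show ?case .
qed

text \<open>The true value is \<open>\<pi>\<^sup>2/6\<close>; the telescoping bound \<open>1/k\<^sup>2 \<le> 1/(k-1) - 1/k\<close> for
  \<open>k \<ge> 3\<close> suffices.\<close>

lemma cube_diam_sq_le: "cube_diam_sq \<le> 7/4"
  unfolding cube_diam_sq_def
proof (rule suminf_le_const[OF summable_side_sq])
  fix n
  have "sum side_sq {..<n} \<le> sum side_sq {..<n + 3}"
    by (rule sum_mono2) (auto simp: side_sq_def)
  also have "\<dots> \<le> 7/4"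
    using sum_side_sq_le[of n] divide_nonneg_nonneg[of 1 "real n + 2"] by linarith
  finally show "sum side_sq {..<n} \<le> 7/4" .
qed

lemma suminf_le_suminf_minus_gap:
  fixes f g :: "nat \<Rightarrow> real"
  assumes "summable f" "summable g" "\<And>k. f k \<le> g k"
  shows "suminf f \<le> suminf g - (g j - f j)"
    and "suminf f = suminf g - (g j - f j) \<longleftrightarrow> (\<forall>k. k \<noteq> j \<longrightarrow> f k = g k)"
proof -
  define h where "h k = (if k = j then 0 else g k - f k)" for k
  have "(\<lambda>k. (g k - f k) - (if k = j then g k - f k else 0)) sums
          ((suminf g - suminf f) - (g j - f j))"
    using assms(1,2) by (intro sums_diff sums_single summable_sums summable_diff)
  moreover have "(\<lambda>k. (g k - f k) - (if k = j then g k - f k else 0)) = h"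
    by (auto simp: h_def)
  ultimately have h_sums: "h sums ((suminf g - suminf f) - (g j - f j))" by simp
  have h_nonneg: "0 \<le> h k" for k using assms(3) by (simp add: h_def)
  show "suminf f \<le> suminf g - (g j - f j)"
    using sums_le[OF _ sums_zero h_sums] h_nonneg by simp
  have "suminf f = suminf g - (g j - f j) \<longleftrightarrow> suminf h = 0"
    using h_sums by (auto simp: sums_iff)
  also have "\<dots> \<longleftrightarrow> (\<forall>k. h k = 0)"
    using h_sums h_nonneg by (intro suminf_eq_zero_iff) (auto simp: sums_iff)
  also have "\<dots> \<longleftrightarrow> (\<forall>k. k \<noteq> j \<longrightarrow> f k = g k)" by (auto simp: h_def)
  finally show "suminf f = suminf g - (g j - f j) \<longleftrightarrow> (\<forall>k. k \<noteq> j \<longrightarrow> f k = g k)" .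
qed

lemma hilbert_cube_coord: "x \<in> hilbert_cube \<Longrightarrow> 0 \<le> x k \<and> x k \<le> 1 / real k"
  unfolding hilbert_cube_def by (cases "k = 0") auto

lemma coord_diff_sq_le_side_sq:
  assumes "a \<in> hilbert_cube" "b \<in> hilbert_cube"
  shows "(a k - b k)^2 \<le> side_sq k"
proof -
  have "\<bar>a k - b k\<bar> \<le> 1 / real k"
    using hilbert_cube_coord[OF assms(1), of k] hilbert_cube_coord[OF assms(2), of k] by auto
  then have "\<bar>a k - b k\<bar>^2 \<le> (1 / real k)^2" by (rule power_mono) simp
  then show ?thesis by (simp add: side_sq_def)
qed

lemma coord_diff_sq_eq_side_sq_iff:
  assumes "a \<in> hilbert_cube" "b \<in> hilbert_cube"
  shows "(a k - b k)^2 = side_sq k \<longleftrightarrow> {a k, b k} = {0, 1 / real k}"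
proof -
  have "(a k - b k)^2 = side_sq k \<longleftrightarrow> a k - b k = 1 / real k \<or> a k - b k = - (1 / real k)"
    by (simp add: side_sq_def power2_eq_iff)
  also have "\<dots> \<longleftrightarrow> {a k, b k} = {0, 1 / real k}"
    using hilbert_cube_coord[OF assms(1), of k] hilbert_cube_coord[OF assms(2), of k]
    by (auto simp: doubleton_eq_iff)
  finally show ?thesis .
qed

lemma summable_coord_diff_sq:
  assumes "a \<in> hilbert_cube" "b \<in> hilbert_cube"
  shows "summable (\<lambda>k. (a k - b k)^2)"
  by (rule summable_comparison_test'[OF summable_side_sq, of 0])
    (simp add: coord_diff_sq_le_side_sq[OF assms])

lemma
  assumes "a \<in> hilbert_cube" "b \<in> hilbert_cube"
  shows sqdist_le: "sqdist a b \<le> cube_diam_sq - 1 + (a 1 - b 1)^2"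
    and sqdist_eq_iff: "sqdist a b = cube_diam_sq - 1 + (a 1 - b 1)^2 \<longleftrightarrow>
      (\<forall>k. k \<noteq> 1 \<longrightarrow> (a k - b k)^2 = side_sq k)"
proof -
  have side_sq_1: "side_sq 1 = 1" by (simp add: side_sq_def)
  note gap = suminf_le_suminf_minus_gap[OF summable_coord_diff_sq[OF assms] summable_side_sq
      coord_diff_sq_le_side_sq[OF assms], of 1]
  show "sqdist a b \<le> cube_diam_sq - 1 + (a 1 - b 1)^2"
    using gap(1) unfolding sqdist_def cube_diam_sq_def side_sq_1 by simp
  show "sqdist a b = cube_diam_sq - 1 + (a 1 - b 1)^2 \<longleftrightarrow>
      (\<forall>k. k \<noteq> 1 \<longrightarrow> (a k - b k)^2 = side_sq k)"
    using gap(2) unfolding sqdist_def cube_diam_sq_def side_sq_1 by (simp add: algebra_simps)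
qed

lemma le_min_dist_iff:
  assumes "finite D" "p \<in> D" "q \<in> D" "p \<noteq> q"
  shows "r \<le> min_dist D \<longleftrightarrow> (\<forall>a\<in>D. \<forall>b\<in>D. a \<noteq> b \<longrightarrow> r \<le> l2dist a b)"
proof -
  let ?S = "{l2dist a b | a b. a \<in> D \<and> b \<in> D \<and> a \<noteq> b}"
  have "finite {l2dist a b | a b. a \<in> D \<and> b \<in> D}"
    using assms(1) by (intro finite_image_set2) auto
  then have "finite ?S" by (rule finite_subset[rotated]) blast
  moreover have "?S \<noteq> {}" using assms(2-4) by blast
  ultimately have "r \<le> Inf ?S \<longleftrightarrow> (\<forall>d\<in>?S. r \<le> d)"
    by (intro le_cInf_iff bdd_below_finite)
  then show ?thesis unfolding min_dist_def by blast
qed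

lemma min_dist_le:
  assumes "finite D" "p \<in> D" "q \<in> D" "p \<noteq> q"
  shows "min_dist D \<le> l2dist p q"
  using le_min_dist_iff[OF assms, of "min_dist D"] assms(2-4) by blast

lemma close_pair_in_unit_interval:
  fixes u v w :: real
  assumes "u \<in> {0..1}" "v \<in> {0..1}" "w \<in> {0..1}"
  shows "\<bar>u - v\<bar> \<le> 1/2 \<or> \<bar>v - w\<bar> \<le> 1/2 \<or> \<bar>u - w\<bar> \<le> 1/2"
  using assms by (simp add: abs_if) arith

lemma spread_triple_in_unit_interval:
  fixes u v w :: real
  assumes "u \<in> {0..1}" "v \<in> {0..1}" "w \<in> {0..1}"
    and "\<bar>u - v\<bar> \<ge> 1/2" "\<bar>v - w\<bar> \<ge> 1/2" "\<bar>u - w\<bar> \<ge> 1/2"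
  shows "{u, v, w} = {0, 1/2, 1}"
proof -
  have "u \<in> {0, 1/2, 1}" "v \<in> {0, 1/2, 1}" "w \<in> {0, 1/2, 1}"
    using assms by (simp_all add: abs_if; arith)+
  moreover have "0 \<in> {u, v, w}" "1/2 \<in> {u, v, w}" "1 \<in> {u, v, w}"
    using assms by (simp_all add: abs_if; arith)+
  ultimately show ?thesis by blast
qed

lemma min_dist_three_le:
  assumes "D \<subseteq> hilbert_cube" "card D = 3"
  shows "min_dist D \<le> sqrt (cube_diam_sq - 3/4)"
proof -
  have close_pair: "\<exists>p\<in>D. \<exists>q\<in>D. p \<noteq> q \<and> \<bar>p 1 - q 1\<bar> \<le> 1/2"
  proof -
    obtain a b c where D: "D = {a, b, c}" "a \<noteq> b" "b \<noteq> c" "a \<noteq> c"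
      using assms(2) card_3_iff by metis
    have "a 1 \<in> {0..1}" "b 1 \<in> {0..1}" "c 1 \<in> {0..1}"
      using hilbert_cube_coord[of _ 1] assms(1) D(1) by auto
    then have "\<bar>a 1 - b 1\<bar> \<le> 1/2 \<or> \<bar>b 1 - c 1\<bar> \<le> 1/2 \<or> \<bar>a 1 - c 1\<bar> \<le> 1/2"
      by (rule close_pair_in_unit_interval)
    then show ?thesis using D by blast
  qed
  then obtain p q where pq: "p \<in> D" "q \<in> D" "p \<noteq> q" "\<bar>p 1 - q 1\<bar> \<le> 1/2" by blast
  have "(p 1 - q 1)^2 \<le> 1/4"
    using abs_le_square_iff[of "p 1 - q 1" "1/2"] pq(4) by (simp add: power_divide)
  moreover have "p \<in> hilbert_cube" "q \<in> hilbert_cube" using pq(1,2) assms(1) by auto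
  ultimately have "sqdist p q \<le> cube_diam_sq - 3/4"
    using sqdist_le[of p q] by linarith
  then have "l2dist p q \<le> sqrt (cube_diam_sq - 3/4)" by (simp add: l2dist_sqdist)
  moreover have "finite D" using assms(2) card_ge_0_finite by force
  ultimately show ?thesis using min_dist_le[of D p q] pq by linarith
qed

lemma pts_in_hilbert_cube: "pt_x \<in> hilbert_cube" "pt_y \<in> hilbert_cube" "pt_z \<in> hilbert_cube"
  by (auto simp: hilbert_cube_def pt_x_def pt_y_def pt_z_def e_def)

lemma pts_first_coord: "pt_x 1 = 0" "pt_y 1 = 1/2" "pt_z 1 = 1"
  by (auto simp: pt_x_def pt_y_def pt_z_def e_def)

lemma pts_distinct: "pt_x \<noteq> pt_y" "pt_y \<noteq> pt_z" "pt_x \<noteq> pt_z"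
  using pts_first_coord by force+

lemma sqdist_pt_x_pt_y: "sqdist pt_x pt_y = cube_diam_sq - 3/4"
proof -
  have "sqdist pt_x pt_y = cube_diam_sq - 1 + (pt_x 1 - pt_y 1)^2"
    by (subst sqdist_eq_iff[OF pts_in_hilbert_cube(1,2)]) (auto simp: pt_x_def pt_y_def side_sq_def)
  then show ?thesis unfolding pts_first_coord by (simp add: power2_eq_square)
qed

lemma sqdist_pt_y_pt_z: "sqdist pt_y pt_z = cube_diam_sq - 3/4"
proof -
  have "sqdist pt_y pt_z = cube_diam_sq - 1 + (pt_y 1 - pt_z 1)^2"
    by (subst sqdist_eq_iff[OF pts_in_hilbert_cube(2,3)]) (auto simp: pt_y_def pt_z_def e_def side_sq_def)
  then show ?thesis unfolding pts_first_coord by (simp add: power2_eq_square)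
qed

lemma sqdist_pt_x_pt_z: "sqdist pt_x pt_z = 1"
proof -
  have "(\<lambda>k. (pt_x k - pt_z k)^2) = (\<lambda>k. if k = 1 then 1 else 0)"
    by (auto simp: pt_x_def pt_z_def e_def)
  then show ?thesis
    unfolding sqdist_def using sums_single[of 1 "\<lambda>_. 1::real"] by (simp add: sums_iff)
qed

lemma min_dist_pts: "min_dist {pt_x, pt_y, pt_z} = sqrt (cube_diam_sq - 3/4)"
proof (rule antisym)
  show "min_dist {pt_x, pt_y, pt_z} \<le> sqrt (cube_diam_sq - 3/4)"
    using pts_in_hilbert_cube pts_distinct by (intro min_dist_three_le) auto
  have "cube_diam_sq - 3/4 \<le> sqdist a b"
    if "a \<in> {pt_x, pt_y, pt_z}" "b \<in> {pt_x, pt_y, pt_z}" "a \<noteq> b" for a b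
    using that cube_diam_sq_le sqdist_pt_x_pt_y sqdist_pt_y_pt_z sqdist_pt_x_pt_z sqdist_commute
    by auto
  then show "sqrt (cube_diam_sq - 3/4) \<le> min_dist {pt_x, pt_y, pt_z}"
    using pts_distinct by (subst le_min_dist_iff[of _ pt_x pt_y]) (auto simp: l2dist_sqdist)
qed

lemma first_coord_gap_of_sqdist_ge:
  assumes "a \<in> hilbert_cube" "b \<in> hilbert_cube" "cube_diam_sq - 3/4 \<le> sqdist a b"
  shows "1/2 \<le> \<bar>a 1 - b 1\<bar>"
proof -
  have "(1/2)^2 \<le> (a 1 - b 1)^2"
    using assms(3) sqdist_le[OF assms(1,2)] by (simp add: power_divide)
  then show ?thesis using abs_le_square_iff[of "1/2" "a 1 - b 1"] by simp
qed

lemma coords_extremal_of_sqdist_ge: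
  assumes "a \<in> hilbert_cube" "b \<in> hilbert_cube" "cube_diam_sq - 3/4 \<le> sqdist a b"
    and "\<bar>a 1 - b 1\<bar> = 1/2"
  shows "\<forall>k. k \<noteq> 1 \<longrightarrow> (a k - b k)^2 = side_sq k"
proof -
  have "(a 1 - b 1)^2 = 1/4"
    using power2_abs[of "a 1 - b 1", unfolded assms(4)] by (simp add: power_divide)
  then have "sqdist a b = cube_diam_sq - 1 + (a 1 - b 1)^2"
    using assms(3) sqdist_le[OF assms(1,2)] by linarith
  then show ?thesis using sqdist_eq_iff[OF assms(1,2)] by blast
qed

lemma extremal_triple_of_min_dist_ge:
  assumes C: "C \<subseteq> hilbert_cube" "card C = 3"
    and min_dist_ge: "sqrt (cube_diam_sq - 3/4) \<le> min_dist C"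
  obtains a b c where "C = {a, b, c}" "a 1 = 0" "b 1 = 1/2" "c 1 = 1"
    "\<forall>k. k \<noteq> 1 \<longrightarrow> (a k - b k)^2 = side_sq k"
    "\<forall>k. k \<noteq> 1 \<longrightarrow> (b k - c k)^2 = side_sq k"
proof -
  have fin: "finite C" using C(2) card_ge_0_finite by force
  have far: "cube_diam_sq - 3/4 \<le> sqdist p q" if "p \<in> C" "q \<in> C" "p \<noteq> q" for p q
  proof -
    have "sqrt (cube_diam_sq - 3/4) \<le> sqrt (sqdist p q)"
      using min_dist_ge min_dist_le[OF fin that] unfolding l2dist_sqdist by linarith
    then show ?thesis by simp
  qed
  have unit: "p 1 \<in> {0..1}" if "p \<in> C" for p
    using hilbert_cube_coord[of p 1] C(1) that by auto
  obtain p0 q0 r0 where C_eq: "C = {p0, q0, r0}" "p0 \<noteq> q0" "q0 \<noteq> r0" "p0 \<noteq> r0"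
    using C(2) card_3_iff by metis
  then have "{p0 1, q0 1, r0 1} = {0, 1/2, 1}"
    using C(1) unit[of p0] unit[of q0] unit[of r0] far[of p0 q0] far[of q0 r0] far[of p0 r0]
    by (intro spread_triple_in_unit_interval first_coord_gap_of_sqdist_ge) auto
  then have "(\<lambda>p. p 1) ` C = {0, 1/2, 1}" using C_eq(1) by simp
  then have "0 \<in> (\<lambda>p. p 1) ` C" "1/2 \<in> (\<lambda>p. p 1) ` C" "1 \<in> (\<lambda>p. p 1) ` C"
    by auto
  then obtain a b c where abc: "a \<in> C" "b \<in> C" "c \<in> C" "a 1 = 0" "b 1 = 1/2" "c 1 = 1"
    by (auto elim!: imageE)
  then have "a \<noteq> b" "b \<noteq> c" "a \<noteq> c" by force+
  then have "card {a, b, c} = 3" by simp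
  then have C_abc: "C = {a, b, c}"
    using abc fin by (intro card_subset_eq[symmetric]) (auto simp: C(2))
  have "\<bar>a 1 - b 1\<bar> = 1/2" "\<bar>b 1 - c 1\<bar> = 1/2"
    unfolding abc(4-6) by simp_all
  then show thesis
    using that[OF C_abc abc(4-6)] coords_extremal_of_sqdist_ge far abc(1-3) C(1)
      \<open>a \<noteq> b\<close> \<open>b \<noteq> c\<close> by blast
qed

lemma cube_reflect_cube_reflect [simp]: "cube_reflect S (cube_reflect S u) = u"
  by (auto simp: cube_reflect_def)

lemma cube_reflect_in_hilbert_cube: "u \<in> hilbert_cube \<Longrightarrow> cube_reflect S u \<in> hilbert_cube"
  by (auto simp: hilbert_cube_def cube_reflect_def)

lemma l2dist_cube_reflect: "l2dist (cube_reflect S u) (cube_reflect S v) = l2dist u v"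
proof -
  have "(\<lambda>k. (cube_reflect S u k - cube_reflect S v k)^2) = (\<lambda>k. (u k - v k)^2)"
    by (auto simp: cube_reflect_def power2_commute)
  then show ?thesis by (simp add: l2dist_def)
qed

lemma cube_isometry_cube_reflect: "cube_isometry (cube_reflect S)"
proof -
  have "bij_betw (cube_reflect S) hilbert_cube hilbert_cube"
    by (rule bij_betw_byWitness[where f' = "cube_reflect S"])
      (auto intro: cube_reflect_in_hilbert_cube)
  then show ?thesis by (simp add: cube_isometry_def l2dist_cube_reflect)
qed

lemma cube_reflect_pts:
  assumes H: "a \<in> hilbert_cube" "b \<in> hilbert_cube" "c \<in> hilbert_cube"
    and first: "a 1 = 0" "b 1 = 1/2" "c 1 = 1"
    and ab: "\<forall>k. k \<noteq> 1 \<longrightarrow> (a k - b k)^2 = side_sq k"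
    and bc: "\<forall>k. k \<noteq> 1 \<longrightarrow> (b k - c k)^2 = side_sq k"
  shows "cube_reflect {k. a k \<noteq> 0} ` {pt_x, pt_y, pt_z} = {a, b, c}"
proof -
  let ?f = "cube_reflect {k. a k \<noteq> 0}"
  have zero: "a 0 = 0" "b 0 = 0" "c 0 = 0" using H by (auto simp: hilbert_cube_def)
  have "?f pt_x k = a k \<and> ?f pt_y k = b k \<and> ?f pt_z k = c k" for k
  proof (cases "2 \<le> k")
    case True
    then have "{a k, b k} = {0, 1 / real k}" "{b k, c k} = {0, 1 / real k}" "1 / real k \<noteq> 0"
      using ab bc coord_diff_sq_eq_side_sq_iff[OF H(1,2)] coord_diff_sq_eq_side_sq_iff[OF H(2,3)]
      by auto
    then have "(a k = 0 \<and> b k = 1 / real k \<and> c k = 0) \<or>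
        (a k = 1 / real k \<and> b k = 0 \<and> c k = 1 / real k)"
      unfolding doubleton_eq_iff by auto
    moreover have "pt_x k = 0" "pt_y k = 1 / real k" "pt_z k = 0"
      using True by (auto simp: pt_x_def pt_y_def pt_z_def e_def)
    ultimately show ?thesis
      using \<open>1 / real k \<noteq> 0\<close> by (auto simp: cube_reflect_def)
  next
    case False
    then consider "k = 0" | "k = 1" by linarith
    then show ?thesis
    proof cases
      case 1
      then show ?thesis using zero by (simp add: cube_reflect_def pt_x_def pt_y_def pt_z_def e_def)
    next
      case 2
      then show ?thesis using first pts_first_coord by (simp add: cube_reflect_def)
    qed
  qed
  then have "?f pt_x = a" "?f pt_y = b" "?f pt_z = c" by (simp_all add: fun_eq_iff)
  then show ?thesis by simp
qed

theorem lemma4p20: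
  shows "optimal_code 3 {pt_x, pt_y, pt_z} \<and>
    (\<forall>C. optimal_code 3 C \<longrightarrow> (\<exists>f. cube_isometry f \<and> f ` {pt_x, pt_y, pt_z} = C))"
proof
  show optimal: "optimal_code 3 {pt_x, pt_y, pt_z}"
    using pts_in_hilbert_cube pts_distinct min_dist_three_le
    by (auto simp: optimal_code_def min_dist_pts)
  show "\<forall>C. optimal_code 3 C \<longrightarrow> (\<exists>f. cube_isometry f \<and> f ` {pt_x, pt_y, pt_z} = C)"
  proof (intro allI impI)
    fix C assume "optimal_code 3 C"
    then have C: "C \<subseteq> hilbert_cube" "card C = 3"
      and "sqrt (cube_diam_sq - 3/4) \<le> min_dist C"
      using optimal by (auto simp: optimal_code_def min_dist_pts[symmetric])
    then obtain a b c where "C = {a, b, c}" "a 1 = 0" "b 1 = 1/2" "c 1 = 1"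
      "\<forall>k. k \<noteq> 1 \<longrightarrow> (a k - b k)^2 = side_sq k"
      "\<forall>k. k \<noteq> 1 \<longrightarrow> (b k - c k)^2 = side_sq k"
      by (rule extremal_triple_of_min_dist_ge)
    moreover have "a \<in> hilbert_cube" "b \<in> hilbert_cube" "c \<in> hilbert_cube"
      using C \<open>C = {a, b, c}\<close> by auto
    ultimately show "\<exists>f. cube_isometry f \<and> f ` {pt_x, pt_y, pt_z} = C"
      using cube_isometry_cube_reflect cube_reflect_pts by blast
  qed
qed

end
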